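(* Let $(x,y)\mapsto x\cdot y$ be the symmetric bilinear form associated to a positive definite quadratic form on $\mathbb{R}^2$. Let $b_1,b_2\in\mathbb{R}^2$ be linearly independent and $v_1,v_2\in\mathbb{R}^2$ distinct. If $b_1\cdot b_2\ne 0$, $v_1\cdot v_1=v_2\cdot v_2$, and $|v_1\cdot b_j|=|v_2\cdot b_j|$ for $j=1,2$, then $v_1=-v_2$. *)

theory Defs
  imports "HOL-Analysis.Analysis"
begin

definition pos_def_sym_bilinear :: "('a::real_vector \<Rightarrow> 'a \<Rightarrow> real) \<Rightarrow> bool" where
  "pos_def_sym_bilinear B \<longleftrightarrow> bilinear B \<and> (\<forall>x y. B x y = B y x) \<and> (\<forall>x. x \<noteq> 0 \<longrightarrow> B x x > 0)"

end

theory Submission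
  imports Defs
begin

text \<open>Put \<open>w = v1 - v2\<close> and \<open>u = v1 + v2\<close>. Equal norms make \<open>u\<close> and \<open>w\<close> orthogonal, and
  \<open>\<bar>v1 \<cdot> b\<bar> = \<bar>v2 \<cdot> b\<bar>\<close> means that \<open>b\<close> is orthogonal to \<open>w\<close> or to \<open>u\<close>. A vector orthogonal to
  both basis vectors vanishes. In the mixed case, say \<open>w \<bottom> b1\<close> and \<open>u \<bottom> b2\<close>, a nonzero \<open>w\<close>
  would force both \<open>u\<close> and \<open>b1\<close> onto the line \<open>w\<^sup>\<bottom>\<close>, and then \<open>u \<bottom> b2\<close> together with
  \<open>b1 \<cdot> b2 \<noteq> 0\<close> gives \<open>u = 0\<close>. Since \<open>v1 \<noteq> v2\<close>, in every case \<open>u = 0\<close>.\<close>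

lemma span_pair_coords:
  fixes p q :: "'a::real_vector"
  assumes "x \<in> span {p, q}"
  obtains c d where "x = c *\<^sub>R p + d *\<^sub>R q"
  using assms by (auto simp: span_insert span_singleton) (metis add.commute diff_add_cancel)

lemma span_pair_eq_UNIV:
  fixes b1 b2 :: "'a::euclidean_space"
  assumes "DIM('a) = 2" and "b1 \<noteq> b2" and "independent {b1, b2}"
  shows "span {b1, b2} = UNIV"
  using card_ge_dim_independent[of "{b1, b2}" UNIV] assms by auto

lemma pos_def_sym_bilinear_eq_0_if_orthogonal_span:
  assumes B: "pos_def_sym_bilinear B"
    and x: "x \<in> span S" and orth: "\<And>s. s \<in> S \<Longrightarrow> B x s = 0"
  shows "x = 0"
proof -
  have "linear (B x)"
    using B by (simp add: pos_def_sym_bilinear_def bilinear_def)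
  then have "B x x = 0"
    using linear_eq_0_on_span orth x by blast
  then show ?thesis
    using B unfolding pos_def_sym_bilinear_def by force
qed

lemma pos_def_sym_bilinear_orthogonal_pair:
  assumes B: "pos_def_sym_bilinear B"
    and plane: "span {p, q} = UNIV" and "B p q \<noteq> 0"
    and "B w p = 0" and "B u q = 0" and "B u w = 0"
  shows "w = 0 \<or> u = 0"
proof -
  have bl: "bilinear B" and sym: "\<And>x y. B x y = B y x"
    using B by (auto simp: pos_def_sym_bilinear_def)
  note lin = bilinear_ladd[OF bl] bilinear_lmul[OF bl]
  obtain c d where u: "u = c *\<^sub>R p + d *\<^sub>R q"
    using span_pair_coords plane by blast
  have pq: "c * B p q + d * B q q = 0"
    using \<open>B u q = 0\<close> by (simp add: u lin)
  have "d * B q w = 0"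
    using \<open>B u w = 0\<close> \<open>B w p = 0\<close> by (simp add: u lin sym[of p w])
  then have "d = 0 \<or> B w q = 0"
    by (simp add: sym[of q w])
  then show ?thesis
  proof
    assume "d = 0"
    with pq \<open>B p q \<noteq> 0\<close> have "c = 0" by simp
    with \<open>d = 0\<close> show ?thesis by (simp add: u)
  next
    assume "B w q = 0"
    then have "w = 0"
      using pos_def_sym_bilinear_eq_0_if_orthogonal_span[OF B] plane \<open>B w p = 0\<close> by blast
    then show ?thesis ..
  qed
qed

lemma bilinear_abs_eq_iff:
  fixes B :: "'a::real_vector \<Rightarrow> 'b::real_vector \<Rightarrow> real"
  assumes "bilinear B"
  shows "\<bar>B v1 b\<bar> = \<bar>B v2 b\<bar> \<longleftrightarrow> B (v1 - v2) b = 0 \<or> B (v1 + v2) b = 0"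
  by (simp add: abs_eq_iff bilinear_lsub[OF assms] bilinear_ladd[OF assms] eq_neg_iff_add_eq_0)

lemma sym_bilinear_sum_orthogonal_diff:
  assumes "bilinear B" and "\<And>x y. B x y = B y x" and "B v1 v1 = B v2 v2"
  shows "B (v1 + v2) (v1 - v2) = 0"
proof -
  have "B (v1 + v2) (v1 - v2) = (B v1 v1 - B v2 v2) + (B v2 v1 - B v1 v2)"
    by (simp add: bilinear_ladd[OF assms(1)] bilinear_rsub[OF assms(1)])
  then show ?thesis
    by (simp add: assms(3) assms(2)[of v2 v1])
qed

theorem lemma4p8:
  fixes B :: "real^2 \<Rightarrow> real^2 \<Rightarrow> real"
    and b1 b2 v1 v2 :: "real^2"
  assumes "pos_def_sym_bilinear B"
    and "b1 \<noteq> b2" and "independent {b1, b2}"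
    and "v1 \<noteq> v2"
    and "B b1 b2 \<noteq> 0"
    and "B v1 v1 = B v2 v2"
    and "\<bar>B v1 b1\<bar> = \<bar>B v2 b1\<bar>"
    and "\<bar>B v1 b2\<bar> = \<bar>B v2 b2\<bar>"
  shows "v1 = - v2"
proof -
  define w u where "w = v1 - v2" and "u = v1 + v2"
  have bl: "bilinear B" and sym: "\<And>x y. B x y = B y x"
    using assms(1) by (auto simp: pos_def_sym_bilinear_def)
  have plane: "span {b1, b2} = UNIV"
    using span_pair_eq_UNIV[OF _ assms(2,3)] by simp
  have "w \<noteq> 0"
    using assms(4) by (simp add: w_def)
  have "B u w = 0" "B w u = 0"
    using sym_bilinear_sum_orthogonal_diff[OF bl sym assms(6)] sym by (simp_all add: u_def w_def)
  moreover have "B w b1 = 0 \<or> B u b1 = 0" "B w b2 = 0 \<or> B u b2 = 0"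
    using assms(7,8) bilinear_abs_eq_iff[OF bl] by (simp_all add: u_def w_def)
  moreover have "x = 0" if "B x b1 = 0" "B x b2 = 0" for x
    using pos_def_sym_bilinear_eq_0_if_orthogonal_span[OF assms(1), of x "{b1, b2}"] plane that
    by auto
  ultimately have "w = 0 \<or> u = 0"
    using pos_def_sym_bilinear_orthogonal_pair[OF assms(1) plane assms(5)] by blast
  with \<open>w \<noteq> 0\<close> show ?thesis
    by (simp add: u_def eq_neg_iff_add_eq_0)
qed

end
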